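(* For every integer $d>1$ there exist a rational function $r$ of degree $d$ and $2d-2$ distinct points $c_1,\dots,c_{2d-2}\in\mathbb C$ such that $r'(c_j)=0$ and $r(c_j)=\overline{c_j}$ for all $j$. *)

theory Defs
  imports "HOL-Analysis.Analysis" "HOL-Computational_Algebra.Polynomial"
begin

text \<open>A complex rational function is represented by a pair of polynomials p, q
  in lowest terms (coprime, q nonzero); its degree is max (deg p) (deg q),
  and as a function it is z maps to p(z)/q(z) (defined where q(z) is nonzero).\<close>

definition is_rational_fun_of_degree :: "complex poly \<Rightarrow> complex poly \<Rightarrow> nat \<Rightarrow> bool" where
  "is_rational_fun_of_degree p q d \<longleftrightarrow> q \<noteq> 0 \<and> coprime p q \<and> max (degree p) (degree q) = d"

definition rat_eval :: "complex poly \<Rightarrow> complex poly \<Rightarrow> complex \<Rightarrow> complex" where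
  "rat_eval p q z = poly p z / poly q z"

end

theory Submission
  imports Defs "HOL-Computational_Algebra.Fundamental_Theorem_Algebra"
begin

text \<open>For d = n + 1 \<ge> 4 take r(z) = (E z^n + 1) / (z^(n+1) + E z) with E > 0. At a point c with
  c^n = w > 0 the conditions r'(c) = 0 and r(c) = cnj c become two real equations in E, w and
  |c|, both invariant under |c| \<mapsto> 1/|c|. Solving the second one for E as a function of t = |c| and
  applying the intermediate value theorem to the first on [1/4, 1] yields some t < 1; then the
  n-th roots of t^n and of t^(-n) are 2n = 2d - 2 distinct solutions. For n = 2 the two circles
  would coincide, so d = 2 and d = 3 are settled by explicit examples.\<close>

lemma coprime_if_no_common_root:
  fixes p q :: "'a::alg_closed_field poly"
  assumes no_common: "\<And>x. poly p x = 0 \<Longrightarrow> poly q x \<noteq> 0"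
  shows "coprime p q"
proof (rule coprimeI)
  fix g assume "g dvd p" "g dvd q"
  then have common: "poly p x = 0 \<and> poly q x = 0" if "poly g x = 0" for x
    using that by (auto elim!: dvdE)
  have "g \<noteq> 0"
    using common no_common by fastforce
  moreover have "degree g = 0"
    using common no_common alg_closed_imp_poly_has_root[of g] by (metis gr0I)
  ultimately show "is_unit g"
    by (simp add: is_unit_iff_degree)
qed

definition critical_conj_fixed_point :: "complex poly \<Rightarrow> complex poly \<Rightarrow> complex \<Rightarrow> bool" where
  "critical_conj_fixed_point p q c \<longleftrightarrow>
     poly q c \<noteq> 0 \<and> (rat_eval p q has_field_derivative 0) (at c) \<and> rat_eval p q c = cnj c"

lemma critical_conj_fixed_pointI:
  assumes q: "poly q c \<noteq> 0"
    and crit: "poly (pderiv p) c * poly q c = poly p c * poly (pderiv q) c"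
    and fixed: "poly p c = cnj c * poly q c"
  shows "critical_conj_fixed_point p q c"
proof -
  have "(rat_eval p q has_field_derivative
      (poly (pderiv p) c * poly q c - poly p c * poly (pderiv q) c) / (poly q c * poly q c)) (at c)"
    unfolding rat_eval_def[abs_def] by (rule DERIV_divide[OF poly_DERIV poly_DERIV q])
  then show ?thesis
    using q crit fixed by (simp add: critical_conj_fixed_point_def rat_eval_def)
qed

lemma enumerate_critical_conj_fixed_points:
  assumes "is_rational_fun_of_degree p q d" "finite P" "card P = 2*d-2"
    and "\<forall>z\<in>P. critical_conj_fixed_point p q z"
  shows "\<exists>p q :: complex poly. is_rational_fun_of_degree p q d \<and>
           (\<exists>c :: nat \<Rightarrow> complex. inj_on c {1..2*d-2} \<and>
              (\<forall>j\<in>{1..2*d-2}. poly q (c j) \<noteq> 0 \<and>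
                 (rat_eval p q has_field_derivative 0) (at (c j)) \<and>
                 rat_eval p q (c j) = cnj (c j)))"
proof -
  obtain c where "bij_betw c {1..2*d-2} P"
    using ex_bij_betw_nat_finite_1[OF \<open>finite P\<close>] \<open>card P = 2*d-2\<close> by metis
  then show ?thesis
    using assms unfolding bij_betw_def critical_conj_fixed_point_def by blast
qed

definition family_num :: "nat \<Rightarrow> real \<Rightarrow> complex poly" where
  "family_num n E = monom (of_real E) n + 1"

definition family_den :: "nat \<Rightarrow> real \<Rightarrow> complex poly" where
  "family_den n E = monom 1 (n+1) + monom (of_real E) 1"

text \<open>The value of p' q - p q' for p = family_num n E and q = family_den n E at any point c
  with c^n = w.\<close>

definition family_crit_residual :: "nat \<Rightarrow> real \<Rightarrow> real \<Rightarrow> real" where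
  "family_crit_residual n E w = (real n - 1) * E^2 * w - E * w^2 - E - (real n + 1) * w"

lemma family_is_rational_fun:
  assumes "n \<ge> 1" "E^2 \<noteq> 1"
  shows "is_rational_fun_of_degree (family_num n E) (family_den n E) (n+1)"
proof -
  have deg_den: "degree (family_den n E) = n+1"
    unfolding family_den_def using assms(1)
    by (subst degree_add_eq_left) (auto simp: degree_monom_eq intro: le_less_trans[OF degree_monom_le])
  have deg_num: "degree (family_num n E) \<le> n+1"
    unfolding family_num_def
    by (rule order.trans[OF degree_add_le]) (auto intro: order.trans[OF degree_monom_le])
  have "coprime (family_num n E) (family_den n E)"
  proof (rule coprime_if_no_common_root)
    fix x assume num: "poly (family_num n E) x = 0"
    then have "x \<noteq> 0"
      using assms(1) by (auto simp: family_num_def poly_monom power_0_left)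
    moreover have "poly (family_den n E) x = x * (x^n + of_real E)"
      by (simp add: family_den_def poly_monom algebra_simps)
    moreover have "x^n \<noteq> - of_real E"
    proof
      assume "x^n = - of_real E"
      then have "poly (family_num n E) x = of_real (1 - E^2)"
        by (simp add: family_num_def poly_monom power2_eq_square)
      then show False
        using num assms(2) by (metis of_real_eq_0_iff right_minus_eq)
    qed
    ultimately show "poly (family_den n E) x \<noteq> 0"
      by (simp add: add_eq_0_iff2)
  qed
  then show ?thesis
    unfolding is_rational_fun_of_degree_def using deg_num deg_den by auto
qed

lemma family_critical_conj_fixed_point:
  assumes n: "n \<ge> 1" and E: "E > 0" and r: "r > 0"
    and residual: "family_crit_residual n E (r^n) = 0"
    and on_circle: "E * r^n + 1 = r^2 * (r^n + E)"
    and z: "z^n = of_real (r^n)"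
  shows "critical_conj_fixed_point (family_num n E) (family_den n E) z"
proof -
  define e w where "e = complex_of_real E" and "w = complex_of_real (r^n)"
  have norm_z: "norm z = r"
    using arg_cong[OF z, of norm] n r by (auto simp: norm_power intro: power_eq_imp_eq_base)
  then have "z \<noteq> 0"
    using r by auto
  have zw: "z^n = w"
    using z by (simp add: w_def)
  have zn: "z * z^(n-1) = w"
    using zw n by (simp flip: power_Suc)
  have "w + e \<noteq> 0"
    unfolding w_def e_def using r E by (metis add_pos_pos of_real_add of_real_eq_0_iff
      zero_less_power less_irrefl)
  have den: "poly (family_den n E) z = z * (w + e)"
    using zw by (simp add: family_den_def poly_monom algebra_simps e_def)
  have num: "poly (family_num n E) z = e * w + 1"
    using zw by (simp add: family_num_def poly_monom e_def)
  have dnum: "poly (pderiv (family_num n E)) z = of_nat n * e * z^(n-1)"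
    by (simp add: family_num_def pderiv_add pderiv_monom poly_monom e_def)
  have dden: "poly (pderiv (family_den n E)) z = of_nat (n+1) * w + e"
    using zw by (simp add: family_den_def pderiv_add pderiv_monom poly_monom e_def)
  have "poly (pderiv (family_num n E)) z * poly (family_den n E) z
        - poly (family_num n E) z * poly (pderiv (family_den n E)) z
      = of_nat n * e * (z * z^(n-1)) * (w + e) - (e * w + 1) * (of_nat (n+1) * w + e)"
    unfolding den num dnum dden by (simp add: algebra_simps)
  also have "\<dots> = of_real (family_crit_residual n E (r^n))"
    unfolding zn using n
    by (simp add: family_crit_residual_def e_def w_def algebra_simps power2_eq_square of_nat_diff)
  finally have crit: "poly (pderiv (family_num n E)) z * poly (family_den n E) z
      = poly (family_num n E) z * poly (pderiv (family_den n E)) z"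
    using residual by simp
  have "cnj z * z = of_real (r^2)"
    using complex_norm_square[of z] norm_z by (simp add: mult.commute)
  moreover have "e * w + 1 = of_real (r^2) * (w + e)"
    using arg_cong[OF on_circle, of complex_of_real] by (simp add: e_def w_def algebra_simps)
  ultimately have "e * w + 1 = cnj z * (z * (w + e))"
    by (simp add: mult.assoc[symmetric])
  then have fixed: "poly (family_num n E) z = cnj z * poly (family_den n E) z"
    unfolding num den .
  show ?thesis
    using \<open>z \<noteq> 0\<close> \<open>w + e \<noteq> 0\<close> den by (intro critical_conj_fixed_pointI crit fixed) simp
qed

text \<open>The solution E of E t^(k+2) + 1 = t^2 (t^(k+2) + E), i.e. the coefficient for which
  the fixed-point condition holds on the circle of radius t; the geometric sums make it continuous
  at t = 1.\<close>

definition family_coeff :: "nat \<Rightarrow> real \<Rightarrow> real" where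
  "family_coeff k t = (\<Sum>i<k+4. t^i) / (t^2 * (\<Sum>i<k. t^i))"

lemma sum_powers_ge_one:
  fixes t :: real
  assumes "k \<ge> 1" "t \<ge> 0"
  shows "(\<Sum>i<k. t^i) \<ge> 1"
  using member_le_sum[of 0 "{..<k}" "\<lambda>i. t^i"] assms by simp

lemma family_coeff_closed_form:
  assumes "k \<ge> 1" "0 < t" "t < 1"
  shows "family_coeff k t = (1 - t^(k+4)) / (t^2 * (1 - t^k))"
proof -
  have "t^k < 1"
    using assms by (simp add: power_less_one_iff)
  then show ?thesis
    using assms unfolding family_coeff_def sum_gp_strict by (simp add: divide_simps)
qed

lemma family_coeff_gt_one:
  assumes "k \<ge> 1" "0 < t" "t < 1"
  shows "family_coeff k t > 1"
proof -
  have "t^k < 1" "t^2 < 1"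
    using assms by (simp_all add: power_less_one_iff)
  have "t^2 * (1 - t^k) < (1 - t^2) * (1 + t^(k+2)) + t^2 * (1 - t^k)"
    using \<open>t^2 < 1\<close> assms(2) by (simp add: add_pos_pos)
  also have "\<dots> = 1 - t^(k+4)"
    by (simp add: power_add algebra_simps eval_nat_numeral)
  finally show ?thesis
    using assms \<open>t^k < 1\<close> by (simp add: family_coeff_closed_form)
qed

lemma family_coeff_on_circle:
  assumes "k \<ge> 1" "0 < t" "t < 1"
  shows "family_coeff k t * t^(k+2) + 1 = t^2 * (t^(k+2) + family_coeff k t)"
proof -
  have "t^k < 1"
    using assms by (simp add: power_less_one_iff)
  then have "family_coeff k t * (t^2 * (1 - t^k)) = 1 - t^(k+4)"
    using assms by (simp add: family_coeff_closed_form)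
  then show ?thesis
    by (simp add: power_add algebra_simps eval_nat_numeral)
qed

lemma family_crit_residual_neg:
  assumes "E > 0" "w > 0" "(real n - 1) * E * w \<le> 1"
  shows "family_crit_residual n E w < 0"
proof -
  have "E * ((real n - 1) * E * w - 1) \<le> 0"
    using assms by (simp add: mult_nonneg_nonpos)
  moreover have "E * w^2 + (real n + 1) * w > 0"
    using assms by (simp add: add_pos_pos)
  ultimately show ?thesis
    unfolding family_crit_residual_def by (simp add: algebra_simps power2_eq_square)
qed

lemma family_residual_at_one_pos:
  assumes "k \<ge> 1"
  shows "family_crit_residual (k+2) (family_coeff k 1) (1^(k+2)) > 0"
proof -
  have coeff: "family_coeff k 1 = (real k + 4) / real k"
    by (simp add: family_coeff_def)
  have "family_crit_residual (k+2) (family_coeff k 1) (1^(k+2)) = 4 * (real k + 2)^2 / (real k)^2"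
    unfolding coeff using assms by (simp add: family_crit_residual_def field_simps power2_eq_square)
  then show ?thesis
    using assms by simp
qed

lemma four_power_bound: "k \<ge> 1 \<Longrightarrow> 64 * (real k + 1) \<le> 3 * 4^(k+2)"
  by (induction k rule: dec_induct) simp_all

lemma family_residual_at_quarter_neg:
  assumes "k \<ge> 1"
  shows "family_crit_residual (k+2) (family_coeff k (1/4)) ((1/4)^(k+2)) < 0"
proof (rule family_crit_residual_neg)
  have "(\<Sum>i<k+4. (1/4::real)^i) \<le> 4/3"
    unfolding sum_gp_strict by (simp add: field_simps)
  moreover have "(\<Sum>i<k. (1/4::real)^i) \<ge> 1"
    using assms by (rule sum_powers_ge_one) simp
  ultimately have coeff: "family_coeff k (1/4) \<le> 64/3"
    unfolding family_coeff_def by (simp add: field_simps)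
  then show "family_coeff k (1/4) > 0"
    unfolding family_coeff_def using \<open>(\<Sum>i<k. (1/4::real)^i) \<ge> 1\<close>
      sum_powers_ge_one[of "k+4" "1/4::real"] by simp
  have "(real (k+2) - 1) * family_coeff k (1/4) * (1/4)^(k+2) \<le> (real k + 1) * (64/3) * (1/4)^(k+2)"
    using mult_left_mono[OF coeff, of "real k + 1"] by (intro mult_right_mono) (auto simp: add.commute)
  also have "\<dots> \<le> 1"
    using four_power_bound[OF assms] by (simp add: field_simps power_divide)
  finally show "(real (k+2) - 1) * family_coeff k (1/4) * (1/4)^(k+2) \<le> 1" .
qed simp

lemma family_coeff_continuous:
  assumes "k \<ge> 1"
  shows "continuous_on {1/4..1} (family_coeff k)"
proof -
  have "t^2 * (\<Sum>i<k. t^i) \<noteq> 0" if "t \<in> {1/4..1}" for t :: real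
    using that assms sum_powers_ge_one[of k t] by auto
  then show ?thesis
    unfolding family_coeff_def[abs_def] by (auto intro!: continuous_intros)
qed

lemma family_parameter_exists:
  assumes "k \<ge> 1"
  obtains t where "1/4 \<le> t" "t < 1" "family_crit_residual (k+2) (family_coeff k t) (t^(k+2)) = 0"
proof -
  define \<psi> where "\<psi> t = family_crit_residual (k+2) (family_coeff k t) (t^(k+2))" for t
  have "continuous_on {1/4..1} \<psi>"
    unfolding \<psi>_def family_crit_residual_def
    by (intro continuous_intros continuous_on_compose2[OF family_coeff_continuous[OF assms]]) auto
  then obtain t where t: "1/4 \<le> t" "t \<le> 1" "\<psi> t = 0"
    using IVT'[of \<psi> "1/4" 0 1] family_residual_at_quarter_neg[OF assms]
      family_residual_at_one_pos[OF assms] unfolding \<psi>_def by force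
  moreover have "t \<noteq> 1"
    using t family_residual_at_one_pos[OF assms] unfolding \<psi>_def by auto
  ultimately show ?thesis
    using that unfolding \<psi>_def by auto
qed

lemma family_crit_residual_inverse:
  assumes "w \<noteq> 0"
  shows "family_crit_residual n E (1/w) = family_crit_residual n E w / w^2"
  using assms by (simp add: family_crit_residual_def field_simps power2_eq_square)

lemma card_nth_roots_two_radii:
  assumes "n > 0" "0 < r" "0 < s" "r \<noteq> s"
  shows "card ({z::complex. z^n = of_real (r^n)} \<union> {z. z^n = of_real (s^n)}) = 2*n"
proof -
  have "r^n \<noteq> s^n"
    using assms power_eq_imp_eq_base[of r n s] by auto
  then have "{z::complex. z^n = of_real (r^n)} \<inter> {z. z^n = of_real (s^n)} = {}"
    by (auto simp del: of_real_power)
  moreover have "r^n \<noteq> 0" "s^n \<noteq> 0"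
    using assms by auto
  ultimately show ?thesis
    using assms(1) by (simp add: card_Un_disjoint finite_nth_roots card_nth_roots)
qed

lemma family_critical_conj_fixed_points:
  assumes "k \<ge> 1"
  obtains E P
  where "is_rational_fun_of_degree (family_num (k+2) E) (family_den (k+2) E) (k+3)"
    and "finite P" "card P = 2*(k+2)"
    and "\<forall>z\<in>P. critical_conj_fixed_point (family_num (k+2) E) (family_den (k+2) E) z"
proof -
  obtain t where t: "1/4 \<le> t" "t < 1"
    and residual: "family_crit_residual (k+2) (family_coeff k t) (t^(k+2)) = 0"
    using family_parameter_exists[OF assms] .
  define E where "E = family_coeff k t"
  define P where "P = {z::complex. z^(k+2) = of_real (t^(k+2))} \<union> {z. z^(k+2) = of_real ((1/t)^(k+2))}"
  have "t > 0"
    using t by simp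
  have "E > 1"
    using family_coeff_gt_one[OF assms \<open>t > 0\<close> t(2)] by (simp add: E_def)
  have on_circle: "E * t^(k+2) + 1 = t^2 * (t^(k+2) + E)"
    using family_coeff_on_circle[OF assms \<open>t > 0\<close> t(2)] by (simp add: E_def)
  have fixed_on_circle: "critical_conj_fixed_point (family_num (k+2) E) (family_den (k+2) E) z"
    if "r > 0" "family_crit_residual (k+2) E (r^(k+2)) = 0"
      "E * r^(k+2) + 1 = r^2 * (r^(k+2) + E)" "z^(k+2) = of_real (r^(k+2))" for r z
    using family_critical_conj_fixed_point[of "k+2" E r z] that \<open>E > 1\<close> by simp
  have "family_crit_residual (k+2) E ((1/t)^(k+2)) = 0"
    using residual family_crit_residual_inverse[of "t^(k+2)"] \<open>t > 0\<close>
    by (simp add: E_def power_one_over)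
  moreover have "E * (1/t)^(k+2) + 1 = (1/t)^2 * ((1/t)^(k+2) + E)"
    using on_circle \<open>t > 0\<close> by (simp add: field_simps power_one_over)
  moreover have "family_crit_residual (k+2) E (t^(k+2)) = 0"
    using residual unfolding E_def .
  ultimately have "critical_conj_fixed_point (family_num (k+2) E) (family_den (k+2) E) z" if "z \<in> P" for z
    using that fixed_on_circle[of t z] fixed_on_circle[of "1/t" z] on_circle \<open>t > 0\<close>
    unfolding P_def by auto
  moreover have "card P = 2*(k+2)"
  proof -
    have "t * t < 1"
      using mult_strict_left_mono[OF t(2) \<open>t > 0\<close>] t(2) by simp
    then show ?thesis
      unfolding P_def using \<open>t > 0\<close> by (intro card_nth_roots_two_radii) (auto simp: field_simps)
  qed
  moreover have "finite P"
    unfolding P_def by (intro finite_UnI finite_nth_roots) simp_all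
  moreover have "E^2 \<noteq> 1"
    using \<open>E > 1\<close> by (simp add: power2_eq_square) (smt (verit) mult_less_cancel_right2)
  ultimately show ?thesis
    using family_is_rational_fun[of "k+2" E] by (intro that) (auto simp: numeral_3_eq_3)
qed

lemma degree_two_example:
  shows "is_rational_fun_of_degree [:1,0,1:] [:0,2:] 2"
    and "\<forall>z\<in>{1,-1}. critical_conj_fixed_point [:1,0,1:] [:0,2:] z"
proof -
  have "coprime [:1,0,1:] ([:0,2:] :: complex poly)"
    by (rule coprime_if_no_common_root) auto
  then show "is_rational_fun_of_degree [:1,0,1:] [:0,2:] 2"
    by (simp add: is_rational_fun_of_degree_def)
  show "\<forall>z\<in>{1,-1}. critical_conj_fixed_point [:1,0,1:] [:0,2:] z"
    by (auto intro!: critical_conj_fixed_pointI simp: pderiv_pCons)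
qed

lemma degree_three_example_point:
  fixes u :: complex
  assumes u: "u^2 = -3" "cnj u = -u"
  shows "critical_conj_fixed_point [:1,3,3,5:] [:-1,3,9,1:] ((-2 + u) / 7)"
proof (rule critical_conj_fixed_pointI)
  have den: "poly [:-1,3,9,1:] ((-2 + u) / 7) = (-564 - 96 * u) / 343"
    using u(1) by (simp add: algebra_simps power2_eq_square) algebra
  have "u \<noteq> -47/8"
    using u(1) by (auto simp: power2_eq_square)
  then show "poly [:-1,3,9,1:] ((-2 + u) / 7) \<noteq> 0"
    unfolding den by (auto simp: field_simps)
  show "poly (pderiv [:1,3,3,5:]) ((-2 + u) / 7) * poly [:-1,3,9,1:] ((-2 + u) / 7)
      = poly [:1,3,3,5:] ((-2 + u) / 7) * poly (pderiv [:-1,3,9,1:]) ((-2 + u) / 7)"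
    using u(1) by (simp add: pderiv_pCons algebra_simps) algebra
  show "poly [:1,3,3,5:] ((-2 + u) / 7) = cnj ((-2 + u) / 7) * poly [:-1,3,9,1:] ((-2 + u) / 7)"
    using u by (simp add: algebra_simps) algebra
qed

lemma degree_three_example_real_points:
  "critical_conj_fixed_point [:1,3,3,5:] [:-1,3,9,1:] 1"
  "critical_conj_fixed_point [:1,3,3,5:] [:-1,3,9,1:] (-1)"
  by (auto intro!: critical_conj_fixed_pointI simp: pderiv_pCons)

lemma degree_three_example:
  shows "is_rational_fun_of_degree [:1,3,3,5:] [:-1,3,9,1:] 3"
    and "\<exists>P. finite P \<and> card P = 4 \<and> (\<forall>z\<in>P. critical_conj_fixed_point [:1,3,3,5:] [:-1,3,9,1:] z)"
proof -
  have "coprime [:1,3,3,5:] ([:-1,3,9,1:] :: complex poly)"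
  proof (rule coprime_if_no_common_root)
    fix x :: complex
    assume p: "poly [:1,3,3,5:] x = 0"
    show "poly [:-1,3,9,1:] x \<noteq> 0"
    proof
      assume "poly [:-1,3,9,1:] x = 0"
      then have "(1::complex) = 0"
        using p by simp algebra
      then show False
        by simp
    qed
  qed
  then show "is_rational_fun_of_degree [:1,3,3,5:] [:-1,3,9,1:] 3"
    by (simp add: is_rational_fun_of_degree_def)
  define s where "s = \<i> * of_real (sqrt 3)"
  have "Re s = 0" "Im s \<noteq> 0"
    by (simp_all add: s_def)
  then have card: "card {1, -1, (-2 + s) / 7, (-2 - s) / 7} = 4"
    by (simp add: complex_eq_iff)
  have "s^2 = -3" "cnj s = -s"
    by (simp_all add: s_def power_mult_distrib flip: of_real_power)
  then have "critical_conj_fixed_point [:1,3,3,5:] [:-1,3,9,1:] ((-2 + s) / 7)"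
    and "critical_conj_fixed_point [:1,3,3,5:] [:-1,3,9,1:] ((-2 - s) / 7)"
    using degree_three_example_point[of s] degree_three_example_point[of "-s"] by simp_all
  then have "\<forall>z\<in>{1, -1, (-2 + s) / 7, (-2 - s) / 7}. critical_conj_fixed_point [:1,3,3,5:] [:-1,3,9,1:] z"
    using degree_three_example_real_points by blast
  with card show "\<exists>P. finite P \<and> card P = 4 \<and> (\<forall>z\<in>P. critical_conj_fixed_point [:1,3,3,5:] [:-1,3,9,1:] z)"
    by (intro exI[of _ "{1, -1, (-2 + s) / 7, (-2 - s) / 7}"] conjI finite.insertI finite.emptyI)
qed

theorem theorem6p6:
  fixes d :: nat
  assumes "d > 1"
  shows "\<exists>p q :: complex poly. is_rational_fun_of_degree p q d \<and>
           (\<exists>c :: nat \<Rightarrow> complex. inj_on c {1..2*d-2} \<and>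
              (\<forall>j\<in>{1..2*d-2}. poly q (c j) \<noteq> 0 \<and>
                 (rat_eval p q has_field_derivative 0) (at (c j)) \<and>
                 rat_eval p q (c j) = cnj (c j)))"
proof -
  consider "d = 2" | "d = 3" | k where "k \<ge> 1" "d = k + 3"
  proof -
    have "d = 2 \<or> d = 3 \<or> (d - 3 \<ge> 1 \<and> d = (d - 3) + 3)"
      using assms by arith
    then show ?thesis
      using that by blast
  qed
  then show ?thesis
  proof cases
    case 1
    then show ?thesis
      using degree_two_example by (intro enumerate_critical_conj_fixed_points[where P = "{1, -1}"]) auto
  next
    case 2
    obtain P where "finite P" "card P = 2*d-2"
      and "\<forall>z\<in>P. critical_conj_fixed_point [:1,3,3,5:] [:-1,3,9,1:] z"
      using degree_three_example(2) 2 by auto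
    then show ?thesis
      using degree_three_example(1) 2 by (intro enumerate_critical_conj_fixed_points[where P = P]) simp_all
  next
    case (3 k)
    obtain E P
      where "is_rational_fun_of_degree (family_num (k+2) E) (family_den (k+2) E) (k+3)"
        and "finite P" "card P = 2*(k+2)"
        and "\<forall>z\<in>P. critical_conj_fixed_point (family_num (k+2) E) (family_den (k+2) E) z"
      using family_critical_conj_fixed_points[OF \<open>k \<ge> 1\<close>] .
    then show ?thesis
      unfolding \<open>d = k + 3\<close> by (intro enumerate_critical_conj_fixed_points[where P = P]) simp_all
  qed
qed

end
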